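(* Let $d\ge 0$ be an integer. Then: (1) $f(1,d)=\frac{2}{d+2}$ if $d$ is even, and $f(1,d)=\frac{2(d+2)}{(d+1)(d+3)}$ if $d$ is odd. (2) The value $f(1,d)$ equals $\frac{\alpha_1(G)}{n(G)}$ for $G=J_{d+2}$ when $d$ is even, and for $G=(d+3)J_{d+1}\cup(d+1)J_{d+3}$ (disjoint union of $d+3$ copies of $J_{d+1}$ and $d+1$ copies of $J_{d+3}$) when $d$ is odd; these graphs have average degree at most $d$. (3) $f(1,d)\ge \frac{2}{d+2}$. (4) For every finite simple graph $G$ on $n\ge 1$ vertices, $\alpha_1(G)\ge \frac{2n}{\lceil d(G)\rceil+2}$.
   Context: For a graph $G=(V,E)$ and an integer $k\ge 0$, a $k$-independent set is a set $S\subseteq V$ such that the induced subgraph $G[S]$ has maximum degree at most $k$; $\alpha_k(G)$ denotes the maximum cardinality of a $k$-independent set of $G$. $n(G)$ is the number of vertices and $d(G)=2|E(G)|/n(G)$ the average degree. For integers $d,k\ge 0$, $f(k,d)=\inf\left\{\frac{\alpha_k(G)}{n(G)} : G \text{ a finite simple graph with at least one vertex and } d(G)\le d\right\}$. For an even integer $m\ge 2$, $J_m$ denotes the complete graph $K_m$ with the edges of a perfect matching removed. *)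

theory Defs
  imports Complex_Main
begin

definition simple_graph :: "'a set \<Rightarrow> 'a set set \<Rightarrow> bool" where
  "simple_graph V E \<longleftrightarrow> finite V \<and> (\<forall>e\<in>E. e \<subseteq> V \<and> card e = 2)"

definition k_independent :: "nat \<Rightarrow> 'a set \<Rightarrow> 'a set set \<Rightarrow> 'a set \<Rightarrow> bool" where
  "k_independent k V E S \<longleftrightarrow> S \<subseteq> V \<and> (\<forall>u\<in>S. card {v\<in>S. {u, v} \<in> E} \<le> k)"

definition alpha_k :: "nat \<Rightarrow> 'a set \<Rightarrow> 'a set set \<Rightarrow> nat" where
  "alpha_k k V E = Max {card S | S. k_independent k V E S}"

definition avg_deg :: "'a set \<Rightarrow> 'a set set \<Rightarrow> real" where
  "avg_deg V E = 2 * real (card E) / real (card V)"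

text \<open>f(k,d): infimum over all finite simple graphs (every finite graph is isomorphic
  to one with vertices in nat, so we range over graphs with natural-number vertices).\<close>
definition f_kd :: "nat \<Rightarrow> nat \<Rightarrow> real" where
  "f_kd k d = Inf {real (alpha_k k V E) / real (card V) | (V :: nat set) (E :: nat set set).
       simple_graph V E \<and> V \<noteq> {} \<and> avg_deg V E \<le> real d}"

text \<open>J_m: K_m on {0..<m} minus the perfect matching {2t, 2t+1}.\<close>
definition J_verts :: "nat \<Rightarrow> nat set" where
  "J_verts m = {0..<m}"

definition J_edges :: "nat \<Rightarrow> nat set set" where
  "J_edges m = {{i, j} | i j. i < m \<and> j < m \<and> i \<noteq> j \<and> i div 2 \<noteq> j div 2}"

definition copies_V :: "nat \<Rightarrow> 'a set \<Rightarrow> (nat \<times> 'a) set" where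
  "copies_V c V = {0..<c} \<times> V"

definition copies_E :: "nat \<Rightarrow> 'a set set \<Rightarrow> (nat \<times> 'a) set set" where
  "copies_E c E = {(\<lambda>x. (a, x)) ` e | a e. a < c \<and> e \<in> E}"

definition dunion_V :: "'a set \<Rightarrow> 'b set \<Rightarrow> ('a + 'b) set" where
  "dunion_V V1 V2 = Inl ` V1 \<union> Inr ` V2"

definition dunion_E :: "'a set set \<Rightarrow> 'b set set \<Rightarrow> ('a + 'b) set set" where
  "dunion_E E1 E2 = (image Inl) ` E1 \<union> (image Inr) ` E2"

definition Godd_V :: "nat \<Rightarrow> ((nat \<times> nat) + (nat \<times> nat)) set" where
  "Godd_V d = dunion_V (copies_V (d+3) (J_verts (d+1))) (copies_V (d+1) (J_verts (d+3)))"

definition Godd_E :: "nat \<Rightarrow> ((nat \<times> nat) + (nat \<times> nat)) set set" where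
  "Godd_E d = dunion_E (copies_E (d+3) (J_edges (d+1))) (copies_E (d+1) (J_edges (d+3)))"

end

theory Submission
  imports Defs "HOL-Library.Countable"
begin

(* The heart is the inequality  2(i+1)n <= (i+1)(i+2) alpha_1 + m,  valid for
   every i, proved by induction on i and on n:
   - a vertex of degree >= 2(i+1) is deleted: this loses one vertex but >= 2(i+1) edges;
   - if all degrees are < 2(i+1) and m >= i n, Lovasz' defective colouring (i+1 colours,
     each vertex with at most one neighbour of its own colour, found by minimising the
     number of monochromatic edges) gives a 1-independent colour class of size >= n/(i+1);
   - if m < i n, the inequality for i-1 already implies the one for i.
   Taking i = floor(D/2) when 2m <= Dn yields the two lower bounds.

   A 1-independent set meets every copy of J_m in at most two vertices, since
   among three vertices of J_m one is adjacent to the two others.  Since f(1,d) is an infimum over graphs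
   on nat, the extremal graphs are relabelled injectively into nat. *)


definition nbr :: "'a set set \<Rightarrow> 'a \<Rightarrow> 'a set" where
  "nbr E v = {w. {v, w} \<in> E}"

lemma simple_graph_finite: "simple_graph V E \<Longrightarrow> finite V"
  by (simp add: simple_graph_def)

lemma simple_graph_edge: "simple_graph V E \<Longrightarrow> e \<in> E \<Longrightarrow> e \<subseteq> V \<and> card e = 2"
  by (simp add: simple_graph_def)

lemma simple_graph_finite_edges: "simple_graph V E \<Longrightarrow> finite E"
  by (metis Pow_iff finite_Pow_iff finite_subset simple_graph_edge simple_graph_finite subsetI)

lemma nbr_subset: "simple_graph V E \<Longrightarrow> nbr E v \<subseteq> V"
  unfolding nbr_def simple_graph_def by blast

lemma nbr_finite: "simple_graph V E \<Longrightarrow> finite (nbr E v)"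
  using nbr_subset simple_graph_finite finite_subset by metis

lemma nbr_irrefl: "simple_graph V E \<Longrightarrow> v \<notin> nbr E v"
  unfolding nbr_def simple_graph_def by force

lemma card_edges_at: assumes sg: "simple_graph V E"
  shows "card {e\<in>E. v \<in> e} = card (nbr E v)"
proof -
  have "bij_betw (\<lambda>w. {v, w}) (nbr E v) {e\<in>E. v \<in> e}"
  proof (rule bij_betwI')
    fix x y show "({v, x} = {v, y}) = (x = y)" by (metis doubleton_eq_iff)
  next
    fix x assume "x \<in> nbr E v" then show "{v, x} \<in> {e \<in> E. v \<in> e}" by (simp add: nbr_def)
  next
    fix e assume e: "e \<in> {e \<in> E. v \<in> e}"
    then have "card e = 2" using simple_graph_edge[OF sg] by auto
    then obtain a b where ab: "e = {a, b}" "a \<noteq> b" by (meson card_2_iff)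
    then have "e = {v, a} \<or> e = {v, b}" using e by auto
    then show "\<exists>x\<in>nbr E v. e = {v, x}" using e by (auto simp: nbr_def)
  qed
  then show ?thesis by (simp add: bij_betw_same_card)
qed

lemma handshake: assumes sg: "simple_graph V E"
  shows "(\<Sum>v\<in>V. card (nbr E v)) = 2 * card E"
proof -
  have fV: "finite V" and fE: "finite E"
    using simple_graph_finite[OF sg] simple_graph_finite_edges[OF sg] by auto
  have "(\<Sum>v\<in>V. card (nbr E v)) = (\<Sum>v\<in>V. card {e\<in>E. v \<in> e})"
    using card_edges_at[OF sg] by simp
  also have "\<dots> = (\<Sum>v\<in>V. \<Sum>e\<in>E. if v \<in> e then 1 else 0)"
    using fE sum.inter_filter[of E "\<lambda>_. 1::nat"] by simp
  also have "\<dots> = (\<Sum>e\<in>E. \<Sum>v\<in>V. if v \<in> e then 1 else 0)" by (rule sum.swap)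
  also have "\<dots> = (\<Sum>e\<in>E. card {v\<in>V. v \<in> e})"
    using fV sum.inter_filter[of V "\<lambda>_. 1::nat"] by simp
  also have "\<dots> = (\<Sum>e\<in>E. 2)"
  proof (rule sum.cong)
    fix e assume "e \<in> E"
    then have "{v\<in>V. v \<in> e} = e" "card e = 2" using simple_graph_edge[OF sg] by auto
    then show "card {v\<in>V. v \<in> e} = 2" by simp
  qed simp
  finally show ?thesis by simp
qed

text \<open>k-independent sets have at most n vertices, so alpha_k is a maximum over a finite set.\<close>
lemma k_independent_sizes_finite:
  assumes sg: "simple_graph V E"
  shows "finite {card S | S. k_independent k V E S}"
proof -
  have "{card S | S. k_independent k V E S} \<subseteq> {..card V}"
    using simple_graph_finite[OF sg] by (auto simp: k_independent_def card_mono)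
  then show ?thesis using finite_subset by blast
qed

lemma alpha_k_ge: assumes sg: "simple_graph V E" and S: "k_independent k V E S"
  shows "card S \<le> alpha_k k V E"
  unfolding alpha_k_def using k_independent_sizes_finite[OF sg] S by (intro Max_ge) auto

lemma alpha_k_attained: assumes sg: "simple_graph V E"
  shows "\<exists>S. k_independent k V E S \<and> card S = alpha_k k V E"
proof -
  note k_independent_sizes_finite[OF sg]
  moreover have "k_independent k V E {}" by (simp add: k_independent_def)
  ultimately have "alpha_k k V E \<in> {card S | S. k_independent k V E S}"
    unfolding alpha_k_def by (intro Max_in) auto
  then show ?thesis by auto
qed

lemma delete_vertex_simple_graph:
  "simple_graph V E \<Longrightarrow> simple_graph (V - {v}) {e\<in>E. v \<notin> e}"
  unfolding simple_graph_def by auto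

lemma delete_vertex_card_edges: assumes sg: "simple_graph V E"
  shows "card E = card {e\<in>E. v \<notin> e} + card (nbr E v)"
proof -
  have "E = {e\<in>E. v \<notin> e} \<union> {e\<in>E. v \<in> e}" by auto
  then have "card E = card {e\<in>E. v \<notin> e} + card {e\<in>E. v \<in> e}"
    using simple_graph_finite_edges[OF sg]
    by (metis (no_types, lifting) card_Un_disjoint disjoint_iff finite_Un mem_Collect_eq)
  then show ?thesis using card_edges_at[OF sg] by simp
qed

text \<open>A k-independent set of G - v is k-independent in G.\<close>
lemma delete_vertex_alpha: assumes sg: "simple_graph V E"
  shows "alpha_k k (V - {v}) {e\<in>E. v \<notin> e} \<le> alpha_k k V E"
proof -
  obtain S where S: "k_independent k (V - {v}) {e\<in>E. v \<notin> e} S"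
      "card S = alpha_k k (V - {v}) {e\<in>E. v \<notin> e}"
    using alpha_k_attained[OF delete_vertex_simple_graph[OF sg]] by blast
  have "v \<notin> S" using S(1) by (auto simp: k_independent_def)
  then have "{w\<in>S. {u, w} \<in> {e\<in>E. v \<notin> e}} = {w\<in>S. {u, w} \<in> E}" if "u \<in> S" for u
    using that by auto
  then have "k_independent k V E S" using S(1) by (auto simp: k_independent_def)
  then show ?thesis using alpha_k_ge[OF sg] S(2) by metis
qed

lemma image_edge_iff: "inj \<phi> \<Longrightarrow> \<phi> ` e \<in> (`) \<phi> ` E \<longleftrightarrow> e \<in> E"
  by (rule inj_image_mem_iff) (simp add: inj_def inj_image_eq_iff)

lemma k_independent_image:
  assumes inj: "inj \<phi>"
  shows "k_independent k (\<phi> ` V) ((`) \<phi> ` E) (\<phi> ` S) \<longleftrightarrow> k_independent k V E S"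
proof -
  have edge: "{\<phi> u, \<phi> w} \<in> (`) \<phi> ` E \<longleftrightarrow> {u, w} \<in> E" for u w
    using image_edge_iff[OF inj, of "{u, w}" E] by simp
  have "{w' \<in> \<phi> ` S. {\<phi> u, w'} \<in> (`) \<phi> ` E} = \<phi> ` {w \<in> S. {u, w} \<in> E}" for u
    using edge by auto
  then have cards: "card {w' \<in> \<phi> ` S. {\<phi> u, w'} \<in> (`) \<phi> ` E} = card {w \<in> S. {u, w} \<in> E}"
    for u by (simp add: card_image inj_on_subset[OF inj subset_UNIV])
  show ?thesis
    unfolding k_independent_def inj_image_subset_iff[OF inj] by (auto simp: cards)
qed

lemma relabel_graph:
  assumes sg: "simple_graph V E" and inj: "inj \<phi>"
  shows "simple_graph (\<phi> ` V) ((`) \<phi> ` E)" and "card (\<phi> ` V) = card V"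
    and "card ((`) \<phi> ` E) = card E" and "alpha_k k (\<phi> ` V) ((`) \<phi> ` E) = alpha_k k V E"
proof -
  have card_img: "card (\<phi> ` A) = card A" for A by (simp add: card_image inj_on_subset[OF inj subset_UNIV])
  show sg': "simple_graph (\<phi> ` V) ((`) \<phi> ` E)"
    using sg card_img unfolding simple_graph_def by auto
  show "card (\<phi> ` V) = card V" by (rule card_img)
  have "inj ((`) \<phi>)" using inj by (simp add: inj_def inj_image_eq_iff)
  then show "card ((`) \<phi> ` E) = card E" by (simp add: card_image inj_on_subset)
  show "alpha_k k (\<phi> ` V) ((`) \<phi> ` E) = alpha_k k V E"
  proof (rule antisym)
    obtain S' where S': "k_independent k (\<phi> ` V) ((`) \<phi> ` E) S'"
        "card S' = alpha_k k (\<phi> ` V) ((`) \<phi> ` E)"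
      using alpha_k_attained[OF sg'] by blast
    have "S' = \<phi> ` (V \<inter> \<phi> -` S')" using S'(1) by (auto simp: k_independent_def)
    then have "k_independent k V E (V \<inter> \<phi> -` S')" "card S' = card (V \<inter> \<phi> -` S')"
      using S'(1) k_independent_image[OF inj] card_img by metis+
    then show "alpha_k k (\<phi> ` V) ((`) \<phi> ` E) \<le> alpha_k k V E"
      using alpha_k_ge[OF sg] S'(2) by metis
  next
    obtain S where S: "k_independent k V E S" "card S = alpha_k k V E"
      using alpha_k_attained[OF sg] by blast
    then have "k_independent k (\<phi> ` V) ((`) \<phi> ` E) (\<phi> ` S)"
      using k_independent_image[OF inj] by blast
    then show "alpha_k k V E \<le> alpha_k k (\<phi> ` V) ((`) \<phi> ` E)"
      using alpha_k_ge[OF sg'] S(2) card_img by metis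
  qed
qed


section \<open>Lovasz' defective colouring\<close>

definition mono_pairs :: "'a set \<Rightarrow> 'a set set \<Rightarrow> ('a \<Rightarrow> nat) \<Rightarrow> ('a \<times> 'a) set" where
  "mono_pairs V E c = {(x, y). x \<in> V \<and> y \<in> V \<and> {x, y} \<in> E \<and> c x = c y}"

lemma mono_pairs_split:
  assumes sg: "simple_graph V E" and u: "u \<in> V"
  shows "card (mono_pairs V E c) = card {p\<in>mono_pairs V E c. fst p \<noteq> u \<and> snd p \<noteq> u}
          + 2 * card {w\<in>nbr E u. c w = c u}"
proof -
  let ?N = "{w\<in>nbr E u. c w = c u}"
  let ?X = "{p\<in>mono_pairs V E c. fst p \<noteq> u \<and> snd p \<noteq> u}"
  have fN: "finite ?N" using nbr_finite[OF sg] by simp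
  have "?X \<subseteq> V \<times> V" by (auto simp: mono_pairs_def)
  then have fX: "finite ?X" using simple_graph_finite[OF sg] finite_subset by blast
  have ends: "x \<in> V" "y \<in> V" if "{x, y} \<in> E" for x y
    using that simple_graph_edge[OF sg] by auto
  have eq: "mono_pairs V E c = ?X \<union> (Pair u ` ?N \<union> (\<lambda>w. (w, u)) ` ?N)"
    using u by (auto simp: mono_pairs_def nbr_def insert_commute dest: ends)
  have "u \<notin> ?N" using nbr_irrefl[OF sg] by auto
  then have disj: "?X \<inter> (Pair u ` ?N \<union> (\<lambda>w. (w, u)) ` ?N) = {}"
      "Pair u ` ?N \<inter> (\<lambda>w. (w, u)) ` ?N = {}" by auto
  have "card (mono_pairs V E c) = card (?X \<union> (Pair u ` ?N \<union> (\<lambda>w. (w, u)) ` ?N))"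
    using eq by (rule arg_cong)
  also have "\<dots> = card ?X + card (Pair u ` ?N \<union> (\<lambda>w. (w, u)) ` ?N)"
    using fX fN disj(1) by (simp add: card_Un_disjoint)
  also have "\<dots> = card ?X + (card (Pair u ` ?N) + card ((\<lambda>w. (w, u)) ` ?N))"
    using fN disj(2) by (simp add: card_Un_disjoint)
  finally show ?thesis by (simp add: card_image inj_on_def)
qed

lemma card_colour_classes:
  fixes c :: "'a \<Rightarrow> nat"
  assumes "finite N" and "\<forall>w\<in>N. c w < t"
  shows "card N = (\<Sum>k<t. card {w\<in>N. c w = k})"
proof -
  have "card (\<Union>k<t. {w\<in>N. c w = k}) = (\<Sum>k<t. card {w\<in>N. c w = k})"
    by (rule card_UN_disjoint) (use assms(1) in auto)
  moreover have "(\<Union>k<t. {w\<in>N. c w = k}) = N" using assms(2) by auto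
  ultimately show ?thesis by simp
qed

lemma sparse_colour_class:
  fixes c :: "'a \<Rightarrow> nat"
  assumes "finite N" and "card N < 2 * t" and "\<forall>w\<in>N. c w < t"
  shows "\<exists>k<t. card {w\<in>N. c w = k} \<le> 1"
proof (rule ccontr)
  assume "\<not> ?thesis"
  then have "(\<Sum>k<t. 2) \<le> (\<Sum>k<t. card {w\<in>N. c w = k})" by (intro sum_mono) auto
  then show False using card_colour_classes[OF assms(1,3)] assms(2) by simp
qed

lemma large_colour_class:
  fixes c :: "'a \<Rightarrow> nat"
  assumes "finite V" and "0 < t" and "\<forall>v\<in>V. c v < t"
  shows "\<exists>k<t. card V \<le> t * card {v\<in>V. c v = k}"
proof (rule ccontr)
  assume "\<not> ?thesis"
  then have small: "t * card {v\<in>V. c v = k} < card V" if "k < t" for k using that by auto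
  have "t * card V = (\<Sum>k<t. t * card {v\<in>V. c v = k})"
    using card_colour_classes[OF assms(1,3)] by (simp add: sum_distrib_left)
  also have "\<dots> < (\<Sum>k<t. card V)" by (rule sum_strict_mono) (use assms(2) small in auto)
  finally show False by simp
qed

text \<open>If all degrees are below 2t, a colouring with t colours minimising the number of
  monochromatic pairs gives every vertex at most one neighbour of its own colour: otherwise
  recolouring it with a colour used at most once in its neighbourhood would be better.\<close>
lemma defective_colouring:
  assumes sg: "simple_graph V E" and t: "0 < t" and deg: "\<forall>v\<in>V. card (nbr E v) < 2 * t"
  shows "\<exists>c. (\<forall>v\<in>V. c v < t) \<and> (\<forall>u\<in>V. card {w\<in>nbr E u. c w = c u} \<le> 1)"
proof -
  define P where "P c \<longleftrightarrow> (\<forall>v\<in>V. c v < t)" for c :: "'a \<Rightarrow> nat"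
  have "P (\<lambda>_. 0)" using t by (simp add: P_def)
  then obtain c where Pc: "P c"
    and cmin: "\<And>c'. P c' \<Longrightarrow> card (mono_pairs V E c) \<le> card (mono_pairs V E c')"
    using ex_has_least_nat[where P = P and m = "\<lambda>c. card (mono_pairs V E c)"] by blast
  have "card {w\<in>nbr E u. c w = c u} \<le> 1" if uV: "u \<in> V" for u
  proof (rule ccontr)
    assume "\<not> ?thesis"
    then have big: "2 \<le> card {w\<in>nbr E u. c w = c u}" by simp
    have "\<forall>w\<in>nbr E u. c w < t" using Pc nbr_subset[OF sg] by (auto simp: P_def)
    then obtain k where k: "k < t" "card {w\<in>nbr E u. c w = k} \<le> 1"
      using sparse_colour_class[OF nbr_finite[OF sg]] deg uV by blast
    define c' where "c' = c(u := k)"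
    have Pc': "P c'" using Pc k(1) by (simp add: P_def c'_def)
    have rest: "{p\<in>mono_pairs V E c'. fst p \<noteq> u \<and> snd p \<noteq> u}
        = {p\<in>mono_pairs V E c. fst p \<noteq> u \<and> snd p \<noteq> u}"
      by (auto simp: mono_pairs_def c'_def)
    have "{w\<in>nbr E u. c' w = c' u} = {w\<in>nbr E u. c w = k}"
      using nbr_irrefl[OF sg, of u] by (auto simp: c'_def)
    then have "card (mono_pairs V E c') < card (mono_pairs V E c)"
      using mono_pairs_split[OF sg uV, of c'] mono_pairs_split[OF sg uV, of c] rest big k(2)
      by simp
    with cmin[OF Pc'] show False by simp
  qed
  with Pc show ?thesis by (auto simp: P_def)
qed

lemma lovasz_one_independent:
  assumes sg: "simple_graph V E" and t: "0 < t" and deg: "\<forall>v\<in>V. card (nbr E v) < 2 * t"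
  shows "card V \<le> t * alpha_k 1 V E"
proof -
  obtain c where c: "\<forall>v\<in>V. c v < t" and defect: "\<forall>u\<in>V. card {w\<in>nbr E u. c w = c u} \<le> 1"
    using defective_colouring[OF assms] by blast
  obtain k where big: "card V \<le> t * card {v\<in>V. c v = k}"
    using large_colour_class[OF simple_graph_finite[OF sg] t c] by blast
  have "card {w\<in>{v\<in>V. c v = k}. {u, w} \<in> E} \<le> 1" if "u \<in> {v\<in>V. c v = k}" for u
  proof -
    have "{w\<in>{v\<in>V. c v = k}. {u, w} \<in> E} \<subseteq> {w\<in>nbr E u. c w = c u}"
      using that by (auto simp: nbr_def)
    then have "card {w\<in>{v\<in>V. c v = k}. {u, w} \<in> E} \<le> card {w\<in>nbr E u. c w = c u}"
      by (rule card_mono[rotated]) (simp add: nbr_finite[OF sg])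
    then show ?thesis using defect that by fastforce
  qed
  then have "k_independent 1 V E {v\<in>V. c v = k}" by (auto simp: k_independent_def)
  then have "card {v\<in>V. c v = k} \<le> alpha_k 1 V E" by (rule alpha_k_ge[OF sg])
  with big show ?thesis by (meson le_trans mult_le_mono2)
qed


section \<open>The lower bound\<close>

lemma key_inequality_arith:
  fixes i n a m :: nat
  assumes i: "0 < i" and prev: "2*i*n \<le> i*(i+1)*a + m" and sparse: "m < i*n"
  shows "2*(i+1)*n \<le> (i+1)*(i+2)*a + m"
proof -
  define X where "X = i*(i+1)*(i+2)*a"
  have "(i+2)*(2*i*n) \<le> (i+2)*(i*(i+1)*a + m)" using prev by (rule mult_le_mono2)
  moreover have "(i+2)*(2*i*n) = 2*(i*i*n) + 4*(i*n)" "(i+2)*(i*(i+1)*a + m) = X + i*m + 2*m"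
    by (simp_all add: X_def algebra_simps)
  ultimately have "2*(i*i*n) + 2*(i*n) \<le> X + i*m" using sparse by linarith
  moreover have "i*(2*(i+1)*n) = 2*(i*i*n) + 2*(i*n)" "i*((i+1)*(i+2)*a + m) = X + i*m"
    by (simp_all add: X_def algebra_simps)
  ultimately have "i*(2*(i+1)*n) \<le> i*((i+1)*(i+2)*a + m)" by simp
  then show ?thesis using i by simp
qed

text \<open>One step of the double induction behind the key inequality, assuming it for smaller
  graphs with the same i and for the same graph with i-1: delete a vertex of degree at least
  2(i+1) if there is one; otherwise use Lovasz' bound if m >= i n, and the step from i-1 if
  m < i n.\<close>
lemma key_inequality_step:
  fixes V :: "'a set"
  assumes sg: "simple_graph V E"
    and smaller: "\<And>(V' :: 'a set) E'. simple_graph V' E' \<Longrightarrow> card V' < card V \<Longrightarrow>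
        2*(i+1)*card V' \<le> (i+1)*(i+2)*alpha_k 1 V' E' + card E'"
    and previous: "0 < i \<Longrightarrow> 2*i*card V \<le> i*(i+1)*alpha_k 1 V E + card E"
  shows "2*(i+1)*card V \<le> (i+1)*(i+2)*alpha_k 1 V E + card E"
proof (cases "\<exists>v\<in>V. 2*(i+1) \<le> card (nbr E v)")
  case True
  then obtain v where v: "v \<in> V" "2*(i+1) \<le> card (nbr E v)" by blast
  let ?V = "V - {v}" and ?E = "{e\<in>E. v \<notin> e}"
  have cV: "card V = card ?V + 1" using v(1) simple_graph_finite[OF sg]
    by (metis card_Suc_Diff1 Suc_eq_plus1)
  have "2*(i+1)*card ?V \<le> (i+1)*(i+2)*alpha_k 1 ?V ?E + card ?E"
    using smaller[OF delete_vertex_simple_graph[OF sg]] cV by simp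
  moreover have "card E = card ?E + card (nbr E v)" by (rule delete_vertex_card_edges[OF sg])
  moreover have "(i+1)*(i+2)*alpha_k 1 ?V ?E \<le> (i+1)*(i+2)*alpha_k 1 V E"
    using delete_vertex_alpha[OF sg] by (rule mult_le_mono2)
  ultimately show ?thesis using cV v(2) by (simp add: algebra_simps)
next
  case False
  then have deg: "\<forall>v\<in>V. card (nbr E v) < 2*(i+1)" by (auto simp: not_le)
  show ?thesis
  proof (cases "i * card V \<le> card E")
    case True
    have "card V \<le> (i+1) * alpha_k 1 V E" by (rule lovasz_one_independent[OF sg _ deg]) simp
    then have "(i+2)*card V \<le> (i+1)*(i+2)*alpha_k 1 V E"
      by (metis mult.commute mult.left_commute mult_le_mono2)
    with True show ?thesis by (simp add: algebra_simps)
  next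
    case False
    then have sparse: "card E < i * card V" by (simp add: not_le)
    from False have "0 < i" by (cases i) auto
    show ?thesis by (rule key_inequality_arith[OF \<open>0 < i\<close> previous[OF \<open>0 < i\<close>] sparse])
  qed
qed

lemma key_inequality:
  fixes V :: "'a set"
  assumes "simple_graph V E"
  shows "2*(i+1)*card V \<le> (i+1)*(i+2)*alpha_k 1 V E + card E"
  using assms
proof (induction "card V" arbitrary: V E i rule: less_induct)
  case less
  have smaller: "\<And>(V' :: 'a set) E'. simple_graph V' E' \<Longrightarrow> card V' < card V \<Longrightarrow>
      2*(i'+1)*card V' \<le> (i'+1)*(i'+2)*alpha_k 1 V' E' + card E'" for i'
    by (rule less.hyps)
  show ?case
  proof (induction i)
    case 0
    show ?case by (rule key_inequality_step[OF less.prems smaller]) simp_all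
  next
    case (Suc j)
    have previous: "0 < Suc j \<Longrightarrow> 2*Suc j*card V \<le> Suc j*(Suc j+1)*alpha_k 1 V E + card E"
      using Suc.IH by (simp add: algebra_simps)
    show ?case by (rule key_inequality_step[OF less.prems smaller previous])
  qed
qed

text \<open>The sharper bound for odd D, from the key inequality with i = (D-1)/2.\<close>
lemma alpha1_lower_bound_odd:
  assumes sg: "simple_graph V E" and m: "2 * card E \<le> D * card V" and "odd D"
  shows "2*(D+2)*card V \<le> (D+1)*(D+3)*alpha_k 1 V E"
proof -
  obtain j where D: "D = 2*j+1" using \<open>odd D\<close> oddE by blast
  define A where "A = (j+1)*(j+2)*alpha_k 1 V E"
  have "2*(j+1)*card V \<le> A + card E" unfolding A_def by (rule key_inequality[OF sg])
  moreover have "2*(2*(j+1)*card V) = (2*j+1)*card V + (2*j+3)*card V" by (simp add: algebra_simps)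
  moreover have "2 * card E \<le> (2*j+1) * card V" using m D by simp
  ultimately have "(2*j+3)*card V \<le> 2*A" by linarith
  have "2*(D+2)*card V = 2*((2*j+3)*card V)" using D by (simp add: algebra_simps)
  also have "\<dots> \<le> 2*(2*A)" using \<open>(2*j+3)*card V \<le> 2*A\<close> by linarith
  also have "\<dots> = (D+1)*(D+3)*alpha_k 1 V E" using D by (simp add: A_def algebra_simps)
  finally show ?thesis .
qed

lemma alpha1_lower_bound:
  assumes sg: "simple_graph V E" and m: "2 * card E \<le> D * card V"
  shows "2 * card V \<le> (D+2) * alpha_k 1 V E"
proof (cases "even D")
  case True
  then obtain j where D: "D = 2*j" by auto
  have "2*(j+1)*card V \<le> (j+1)*(j+2)*alpha_k 1 V E + card E" by (rule key_inequality[OF sg])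
  moreover have "card E \<le> j * card V" using m D by simp
  ultimately have "(j+2)*card V \<le> (j+2)*((j+1)*alpha_k 1 V E)" by (simp add: algebra_simps)
  then have "card V \<le> (j+1)*alpha_k 1 V E" by (rule mult_le_cancel1[THEN iffD1, THEN mp]) simp
  then show ?thesis using D by simp
next
  case False
  have "(D+2)*(2*card V) = 2*(D+2)*card V" by (simp add: ac_simps)
  also have "\<dots> \<le> (D+1)*(D+3)*alpha_k 1 V E" by (rule alpha1_lower_bound_odd[OF sg m False])
  also have "\<dots> \<le> (D+2)*(D+2)*alpha_k 1 V E" by (intro mult_le_mono1) (simp add: algebra_simps)
  also have "\<dots> = (D+2)*((D+2)*alpha_k 1 V E)" by (rule mult.assoc)
  finally show ?thesis by (rule mult_le_cancel1[THEN iffD1, THEN mp]) simp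
qed

lemma avg_deg_le_iff:
  assumes "finite V" and "V \<noteq> {}"
  shows "avg_deg V E \<le> real D \<longleftrightarrow> 2 * card E \<le> D * card V"
proof -
  have "0 < real (card V)" using assms by (simp add: card_gt_0_iff)
  then have "avg_deg V E \<le> real D \<longleftrightarrow> 2 * real (card E) \<le> real D * real (card V)"
    by (simp add: avg_deg_def pos_divide_le_eq)
  then show ?thesis using of_nat_le_iff[of "2 * card E" "D * card V", where 'a = real] by simp
qed

lemma alpha1_ceiling_bound:
  assumes sg: "simple_graph V E" and ne: "V \<noteq> {}"
  shows "2 * real (card V) / (of_int \<lceil>avg_deg V E\<rceil> + 2) \<le> real (alpha_k 1 V E)"
proof -
  define D where "D = nat \<lceil>avg_deg V E\<rceil>"
  have D: "of_int \<lceil>avg_deg V E\<rceil> = real D" by (simp add: D_def avg_deg_def)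
  have "avg_deg V E \<le> real D" using D le_of_int_ceiling by metis
  then have "2 * card V \<le> (D+2) * alpha_k 1 V E"
    using alpha1_lower_bound[OF sg] avg_deg_le_iff[OF simple_graph_finite[OF sg] ne] by blast
  then have "real (2 * card V) \<le> real ((D+2) * alpha_k 1 V E)" by (simp only: of_nat_le_iff)
  then have "2 * real (card V) \<le> (real D + 2) * real (alpha_k 1 V E)" by (simp add: algebra_simps)
  then show ?thesis unfolding D by (simp add: field_simps)
qed

lemma divide_le_divide_cross:
  fixes a b c d :: real
  shows "0 < b \<Longrightarrow> 0 < d \<Longrightarrow> a * d \<le> c * b \<Longrightarrow> a / b \<le> c / d"
  by (simp add: field_simps)

definition f1_value :: "nat \<Rightarrow> real" where
  "f1_value d = (if even d then 2 / (real d + 2)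
                 else 2 * (real d + 2) / ((real d + 1) * (real d + 3)))"

lemma f1_value_ge: "2 / (real d + 2) \<le> f1_value d"
proof -
  have "2 * ((real d + 1) * (real d + 3)) \<le> 2 * (real d + 2) * (real d + 2)"
    by (simp add: algebra_simps)
  then have "2 / (real d + 2) \<le> 2 * (real d + 2) / ((real d + 1) * (real d + 3))"
    by (intro divide_le_divide_cross) simp_all
  then show ?thesis by (simp add: f1_value_def)
qed

lemma f1_value_lower:
  assumes sg: "simple_graph V E" and ne: "V \<noteq> {}" and avg: "avg_deg V E \<le> real d"
  shows "f1_value d \<le> real (alpha_k 1 V E) / real (card V)"
proof -
  have n: "0 < real (card V)" using ne simple_graph_finite[OF sg] by (simp add: card_gt_0_iff)
  have m: "2 * card E \<le> d * card V"
    using avg avg_deg_le_iff[OF simple_graph_finite[OF sg] ne] by blast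
  show ?thesis
  proof (cases "even d")
    case True
    have "2 * card V \<le> (d+2) * alpha_k 1 V E" by (rule alpha1_lower_bound[OF sg m])
    then have "real (2 * card V) \<le> real ((d+2) * alpha_k 1 V E)" by (simp only: of_nat_le_iff)
    then have "2 * real (card V) \<le> real (alpha_k 1 V E) * (real d + 2)" by (simp add: algebra_simps)
    then show ?thesis using True n by (simp add: f1_value_def divide_le_divide_cross)
  next
    case False
    have "2*(d+2)*card V \<le> (d+1)*(d+3)*alpha_k 1 V E" by (rule alpha1_lower_bound_odd[OF sg m False])
    then have "real (2*(d+2)*card V) \<le> real ((d+1)*(d+3)*alpha_k 1 V E)"
      by (simp only: of_nat_le_iff)
    then have "2*(real d+2)*real (card V) \<le> real (alpha_k 1 V E)*((real d+1)*(real d+3))"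
      by (simp add: algebra_simps)
    then show ?thesis using False n by (simp add: f1_value_def divide_le_divide_cross)
  qed
qed

text \<open>A graph in the class attaining the bound determines f(1,d); the graph may live on any
  countable vertex type, since it can be relabelled into nat.\<close>
lemma f1_attained:
  fixes V :: "'a::countable set"
  assumes sg: "simple_graph V E" and ne: "V \<noteq> {}" and avg: "avg_deg V E \<le> real d"
    and le: "real (alpha_k 1 V E) / real (card V) \<le> f1_value d"
  shows "f_kd 1 d = f1_value d" and "real (alpha_k 1 V E) / real (card V) = f1_value d"
proof -
  let ?V = "to_nat ` V" and ?E = "(`) to_nat ` E"
  note rel = relabel_graph[OF sg inj_to_nat]
  define R where "R = {real (alpha_k 1 V' E') / real (card V') | (V' :: nat set) E'.
       simple_graph V' E' \<and> V' \<noteq> {} \<and> avg_deg V' E' \<le> real d}"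
  have "avg_deg ?V ?E \<le> real d" using avg rel(2,3) by (simp add: avg_deg_def)
  moreover have "?V \<noteq> {}" using ne by simp
  moreover have "real (alpha_k 1 V E) / real (card V) = real (alpha_k 1 ?V ?E) / real (card ?V)"
    using rel(2,4) by simp
  ultimately have mem: "real (alpha_k 1 V E) / real (card V) \<in> R"
    unfolding R_def using rel(1) by blast
  have lower: "f1_value d \<le> x" if "x \<in> R" for x using that f1_value_lower by (auto simp: R_def)
  have "f1_value d \<le> Inf R" by (rule cInf_greatest) (use mem lower in auto)
  moreover have "Inf R \<le> real (alpha_k 1 V E) / real (card V)"
    by (rule cInf_lower[OF mem bdd_belowI]) (rule lower)
  moreover have "f_kd 1 d = Inf R" by (simp add: f_kd_def R_def)
  ultimately show "f_kd 1 d = f1_value d" "real (alpha_k 1 V E) / real (card V) = f1_value d"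
    using le by auto
qed


section \<open>The extremal graphs\<close>

text \<open>If in a block B of vertices any two vertices with different g-values are adjacent and
  each g-value is taken at most twice, a 1-independent set contains at most two vertices of B:
  among three of them one is adjacent to the two others.\<close>
lemma one_independent_meets_block:
  assumes fin: "finite V" and S: "k_independent 1 V E S"
    and adj: "\<And>x y. x \<in> B \<Longrightarrow> y \<in> B \<Longrightarrow> x \<noteq> y \<Longrightarrow> g x \<noteq> g y \<Longrightarrow> {x, y} \<in> E"
    and pairs: "\<And>x y z. x \<in> B \<Longrightarrow> y \<in> B \<Longrightarrow> z \<in> B \<Longrightarrow> g x = g y \<Longrightarrow> g y = g z \<Longrightarrow>
                 x = y \<or> y = z \<or> x = z"
  shows "card (S \<inter> B) \<le> 2"
proof (rule ccontr)
  assume "\<not> ?thesis"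
  then have "3 \<le> card (S \<inter> B)" by simp
  then obtain T where T: "T \<subseteq> S \<inter> B" "card T = 3" by (rule obtain_subset_with_card_n)
  then obtain x y z where xyz: "T = {x, y, z}" "x \<noteq> y" "y \<noteq> z" "x \<noteq> z" by (auto simp: card_3_iff)
  have fS: "finite S" using S fin finite_subset by (auto simp: k_independent_def)
  have two_nbrs: False
    if "w \<in> S" "u \<in> S" "u' \<in> S" "u \<noteq> u'" "{w, u} \<in> E" "{w, u'} \<in> E" for w u u'
  proof -
    have "card {u, u'} \<le> card {v\<in>S. {w, v} \<in> E}" using that fS by (intro card_mono) auto
    then show False using that S by (auto simp: k_independent_def)
  qed
  have mem: "x \<in> S" "y \<in> S" "z \<in> S" "x \<in> B" "y \<in> B" "z \<in> B" using T xyz by auto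
  consider "g x \<noteq> g y" "g x \<noteq> g z" | "g y \<noteq> g x" "g y \<noteq> g z" | "g z \<noteq> g x" "g z \<noteq> g y"
    using pairs[OF mem(4-6)] xyz(2-4) by metis
  then show False
  proof cases
    case 1
    then show False using two_nbrs[OF mem(1,2,3) xyz(3)] adj[OF mem(4,5) xyz(2)] adj[OF mem(4,6) xyz(4)]
      by blast
  next
    case 2
    then show False using two_nbrs[OF mem(2,1,3) xyz(4)] adj[OF mem(5,4)] adj[OF mem(5,6) xyz(3)] xyz(2)
      by blast
  next
    case 3
    then show False using two_nbrs[OF mem(3,1,2) xyz(2)] adj[OF mem(6,4)] adj[OF mem(6,5)] xyz(3,4)
      by blast
  qed
qed

lemma one_independent_blocks:
  assumes fin: "finite V" and S: "k_independent 1 V E S"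
    and adj: "\<And>x y. x \<in> V \<Longrightarrow> y \<in> V \<Longrightarrow> blk x = blk y \<Longrightarrow> x \<noteq> y \<Longrightarrow> g x \<noteq> g y \<Longrightarrow>
                {x, y} \<in> E"
    and pairs: "\<And>x y z. x \<in> V \<Longrightarrow> y \<in> V \<Longrightarrow> z \<in> V \<Longrightarrow> blk x = blk y \<Longrightarrow> blk y = blk z \<Longrightarrow>
                 g x = g y \<Longrightarrow> g y = g z \<Longrightarrow> x = y \<or> y = z \<or> x = z"
  shows "card S \<le> 2 * card (blk ` V)"
proof -
  have block: "card (S \<inter> {x\<in>V. blk x = b}) \<le> 2" for b
  proof (rule one_independent_meets_block[OF fin S])
    fix x y assume "x \<in> {x\<in>V. blk x = b}" "y \<in> {x\<in>V. blk x = b}" "x \<noteq> y" "g x \<noteq> g y"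
    then show "{x, y} \<in> E" by (intro adj) auto
  next
    fix x y z assume "x \<in> {x\<in>V. blk x = b}" "y \<in> {x\<in>V. blk x = b}" "z \<in> {x\<in>V. blk x = b}"
      "g x = g y" "g y = g z"
    then show "x = y \<or> y = z \<or> x = z" by (intro pairs) auto
  qed
  have cover: "(\<Union>b\<in>blk ` V. S \<inter> {x\<in>V. blk x = b}) = S" using S by (auto simp: k_independent_def)
  have "card S \<le> (\<Sum>b\<in>blk ` V. card (S \<inter> {x\<in>V. blk x = b}))"
    using card_UN_le[of "blk ` V" "\<lambda>b. S \<inter> {x\<in>V. blk x = b}"] fin unfolding cover by simp
  also have "\<dots> \<le> (\<Sum>b\<in>blk ` V. 2)" by (rule sum_mono) (rule block)
  finally show ?thesis by simp
qed

lemma div2_fibre_pairs: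
  fixes x y z :: nat
  assumes "x div 2 = y div 2" and "y div 2 = z div 2"
  shows "x = y \<or> y = z \<or> x = z"
proof -
  have "x = 2*(x div 2) + x mod 2" "y = 2*(y div 2) + y mod 2" "z = 2*(z div 2) + z mod 2"
    by simp_all
  moreover have "x mod 2 \<in> {0, 1}" "y mod 2 \<in> {0, 1}" "z mod 2 \<in> {0, 1}" by auto
  ultimately show ?thesis using assms by auto
qed

lemma J_edge_iff: "{x, y} \<in> J_edges m \<longleftrightarrow> x < m \<and> y < m \<and> x \<noteq> y \<and> x div 2 \<noteq> y div 2"
  unfolding J_edges_def by (auto simp: doubleton_eq_iff)

lemma J_simple_graph: "simple_graph (J_verts m) (J_edges m)"
  unfolding simple_graph_def J_verts_def J_edges_def by auto

text \<open>In J_m a vertex x is adjacent to everything except itself and its matching partner p.\<close>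
lemma J_degree: assumes "even m" "x < m" shows "card (nbr (J_edges m) x) \<le> m - 2"
proof -
  define p where "p = (if even x then x + 1 else x - 1)"
  have p: "p < m" "p \<noteq> x" "p div 2 = x div 2" using assms unfolding p_def by presburger+
  have "nbr (J_edges m) x \<subseteq> {0..<m} - {x, p}" using p by (auto simp: nbr_def J_edge_iff)
  then have "card (nbr (J_edges m) x) \<le> card ({0..<m} - {x, p})" by (intro card_mono) auto
  also have "\<dots> = m - 2" using p assms by (subst card_Diff_subset) auto
  finally show ?thesis .
qed

lemma J_edges_card: assumes "even m" shows "2 * card (J_edges m) \<le> m * (m - 2)"
proof -
  have "2 * card (J_edges m) = (\<Sum>v\<in>J_verts m. card (nbr (J_edges m) v))"
    using handshake[OF J_simple_graph] by simp
  also have "\<dots> \<le> (\<Sum>v\<in>J_verts m. m - 2)"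
    using J_degree[OF assms] by (intro sum_mono) (auto simp: J_verts_def)
  finally show ?thesis by (simp add: J_verts_def)
qed

text \<open>J_m is a single block whose pairs are the removed matching edges.\<close>
lemma J_alpha: "alpha_k 1 (J_verts m) (J_edges m) \<le> 2"
proof -
  obtain S where S: "k_independent 1 (J_verts m) (J_edges m) S"
      "card S = alpha_k 1 (J_verts m) (J_edges m)"
    using alpha_k_attained[OF J_simple_graph] by blast
  have "card S \<le> 2 * card ((\<lambda>_. ()) ` J_verts m)"
    by (rule one_independent_blocks[OF _ S(1), where g = "\<lambda>x. x div 2"])
       (auto simp: J_verts_def J_edge_iff intro: div2_fibre_pairs)
  also have "\<dots> \<le> 2" by (simp add: card_le_Suc0_iff_eq)
  finally show ?thesis using S(2) by simp
qed

lemma J_extremal: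
  assumes "even d"
  shows "simple_graph (J_verts (d+2)) (J_edges (d+2))"
    and "avg_deg (J_verts (d+2)) (J_edges (d+2)) \<le> real d"
    and "real (alpha_k 1 (J_verts (d+2)) (J_edges (d+2))) / real (card (J_verts (d+2))) \<le> f1_value d"
proof -
  have cV: "card (J_verts (d+2)) = d + 2" by (simp add: J_verts_def)
  show "simple_graph (J_verts (d+2)) (J_edges (d+2))" by (rule J_simple_graph)
  have "2 * card (J_edges (d+2)) \<le> d * card (J_verts (d+2))"
    using J_edges_card[of "d+2"] assms cV by (simp add: mult.commute)
  then show "avg_deg (J_verts (d+2)) (J_edges (d+2)) \<le> real d"
    using avg_deg_le_iff[of "J_verts (d+2)"] by (simp add: J_verts_def)
  have "real (alpha_k 1 (J_verts (d+2)) (J_edges (d+2))) / real (card (J_verts (d+2)))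
      \<le> 2 / real (card (J_verts (d+2)))"
    using J_alpha by (intro divide_right_mono) auto
  then show "real (alpha_k 1 (J_verts (d+2)) (J_edges (d+2))) / real (card (J_verts (d+2))) \<le> f1_value d"
    using assms by (simp add: J_verts_def f1_value_def add.commute)
qed

lemma copies_simple_graph: assumes "simple_graph V E"
  shows "simple_graph (copies_V c V) (copies_E c E)"
  using simple_graph_finite[OF assms] simple_graph_edge[OF assms]
  by (fastforce simp: simple_graph_def copies_V_def copies_E_def card_image inj_on_def)

lemma simple_graph_Un:
  "simple_graph V1 E1 \<Longrightarrow> simple_graph V2 E2 \<Longrightarrow> simple_graph (V1 \<union> V2) (E1 \<union> E2)"
  unfolding simple_graph_def by blast

lemma dunion_simple_graph: assumes "simple_graph V1 E1" "simple_graph V2 E2"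
  shows "simple_graph (dunion_V V1 V2) (dunion_E E1 E2)"
  unfolding dunion_V_def dunion_E_def
  by (intro simple_graph_Un relabel_graph(1) assms) simp_all

lemma copies_card_edges: assumes "finite E" shows "card (copies_E c E) \<le> c * card E"
proof -
  have eq: "copies_E c E = (\<Union>a<c. (\<lambda>e. (\<lambda>x. (a, x)) ` e) ` E)" by (auto simp: copies_E_def)
  have "card (\<Union>a<c. (\<lambda>e. (\<lambda>x. (a, x)) ` e) ` E) \<le> (\<Sum>a<c. card ((\<lambda>e. (\<lambda>x. (a, x)) ` e) ` E))"
    by (rule card_UN_le) simp
  also have "\<dots> \<le> (\<Sum>a<c. card E)" by (intro sum_mono card_image_le assms)
  finally show ?thesis unfolding eq by simp
qed

lemma dunion_card_edges: assumes "finite E1" "finite E2"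
  shows "card (dunion_E E1 E2) \<le> card E1 + card E2"
  unfolding dunion_E_def
  by (rule order_trans[OF card_Un_le add_mono[OF card_image_le card_image_le]]) (use assms in auto)

lemma copies_edge_iff: "{(a, i), (b, j)} \<in> copies_E c E \<longleftrightarrow> a = b \<and> a < c \<and> {i, j} \<in> E"
proof
  assume "{(a, i), (b, j)} \<in> copies_E c E"
  then obtain a' e where ae: "{(a, i), (b, j)} = (\<lambda>x. (a', x)) ` e" "a' < c" "e \<in> E"
    by (auto simp: copies_E_def)
  then have "a = a'" "b = a'" by (auto simp: set_eq_iff)
  moreover have "e = {i, j}" using arg_cong[OF ae(1), of "(`) snd"] by (simp add: image_image)
  ultimately show "a = b \<and> a < c \<and> {i, j} \<in> E" using ae by simp
next
  assume "a = b \<and> a < c \<and> {i, j} \<in> E"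
  moreover have "{(a, i), (a, j)} = (\<lambda>x. (a, x)) ` {i, j}" by simp
  ultimately show "{(a, i), (b, j)} \<in> copies_E c E" unfolding copies_E_def by blast
qed

lemma dunion_edge_Inl: "{Inl p, Inl q} \<in> dunion_E E1 E2 \<longleftrightarrow> {p, q} \<in> E1"
  using image_edge_iff[of Inl "{p, q}" E1] by (auto simp: dunion_E_def)

lemma dunion_edge_Inr: "{Inr p, Inr q} \<in> dunion_E E1 E2 \<longleftrightarrow> {p, q} \<in> E2"
  using image_edge_iff[of Inr "{p, q}" E2] by (auto simp: dunion_E_def)

lemma Godd_simple_graph: "simple_graph (Godd_V d) (Godd_E d)"
  unfolding Godd_V_def Godd_E_def by (intro dunion_simple_graph copies_simple_graph J_simple_graph)

lemma copies_card_vertices: "finite V \<Longrightarrow> card (copies_V c V) = c * card V"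
  by (simp add: copies_V_def card_cartesian_product)

lemma dunion_card_vertices:
  "finite V1 \<Longrightarrow> finite V2 \<Longrightarrow> card (dunion_V V1 V2) = card V1 + card V2"
  unfolding dunion_V_def by (subst card_Un_disjoint) (auto simp: card_image)

lemma Godd_card: "card (Godd_V d) = 2*(d+1)*(d+3)"
  unfolding Godd_V_def J_verts_def
  by (simp add: dunion_card_vertices copies_card_vertices copies_V_def algebra_simps)

lemma Godd_edges_card: assumes "odd d" shows "2 * card (Godd_E d) \<le> d * card (Godd_V d)"
proof -
  have fJ: "finite (J_edges m)" for m by (rule simple_graph_finite_edges[OF J_simple_graph])
  have "card (Godd_E d) \<le> card (copies_E (d+3) (J_edges (d+1))) + card (copies_E (d+1) (J_edges (d+3)))"
    unfolding Godd_E_def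
    by (rule dunion_card_edges) (simp_all add: simple_graph_finite_edges[OF copies_simple_graph[OF J_simple_graph]])
  also have "\<dots> \<le> (d+3) * card (J_edges (d+1)) + (d+1) * card (J_edges (d+3))"
    by (intro add_mono copies_card_edges fJ)
  finally have "2 * card (Godd_E d) \<le> (d+3) * (2 * card (J_edges (d+1))) + (d+1) * (2 * card (J_edges (d+3)))"
    by (simp add: algebra_simps)
  also have "\<dots> \<le> (d+3) * ((d+1)*(d+1-2)) + (d+1) * ((d+3)*(d+3-2))"
    using assms by (intro add_mono mult_le_mono2 J_edges_card) auto
  also have "\<dots> = d * (2*(d+1)*(d+3))" using assms by (auto elim!: oddE simp: algebra_simps)
  finally show ?thesis by (simp add: Godd_card)
qed

text \<open>The blocks are the 2d+4 copies of J; inside a copy, g is the index of the removed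
  matching edge.\<close>
lemma Godd_alpha: "alpha_k 1 (Godd_V d) (Godd_E d) \<le> 4*d + 8"
proof -
  define blk :: "(nat \<times> nat) + (nat \<times> nat) \<Rightarrow> nat + nat"
    where "blk = case_sum (\<lambda>p. Inl (fst p)) (\<lambda>p. Inr (fst p))"
  define idx :: "(nat \<times> nat) + (nat \<times> nat) \<Rightarrow> nat"
    where "idx = case_sum snd snd"
  define g where "g x = idx x div 2" for x
  have blk_idx_inj: "x = y" if "blk x = blk y" "idx x = idx y" for x y
    using that by (cases x; cases y) (auto simp: blk_def idx_def prod_eq_iff)
  have V: "Godd_V d = Inl ` ({0..<d+3} \<times> {0..<d+1}) \<union> Inr ` ({0..<d+1} \<times> {0..<d+3})"
    by (simp add: Godd_V_def dunion_V_def copies_V_def J_verts_def)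
  obtain S where S: "k_independent 1 (Godd_V d) (Godd_E d) S"
      "card S = alpha_k 1 (Godd_V d) (Godd_E d)"
    using alpha_k_attained[OF Godd_simple_graph] by blast
  have "card S \<le> 2 * card (blk ` Godd_V d)"
  proof (rule one_independent_blocks[OF simple_graph_finite[OF Godd_simple_graph] S(1)])
    fix x y assume xy: "x \<in> Godd_V d" "y \<in> Godd_V d" "blk x = blk y" "x \<noteq> y" "g x \<noteq> g y"
    show "{x, y} \<in> Godd_E d"
    proof (cases x)
      case (Inl p)
      then obtain b j where y: "y = Inl (b, j)" using xy(3) by (cases y) (auto simp: blk_def)
      obtain a i where p: "p = (a, i)" by (cases p)
      have "a = b" "a < d+3" "{i, j} \<in> J_edges (d+1)"
        using xy Inl y p by (auto simp: V blk_def g_def idx_def J_edge_iff)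
      then show ?thesis unfolding Inl y p Godd_E_def dunion_edge_Inl copies_edge_iff by simp
    next
      case (Inr p)
      then obtain b j where y: "y = Inr (b, j)" using xy(3) by (cases y) (auto simp: blk_def)
      obtain a i where p: "p = (a, i)" by (cases p)
      have "a = b" "a < d+1" "{i, j} \<in> J_edges (d+3)"
        using xy Inr y p by (auto simp: V blk_def g_def idx_def J_edge_iff)
      then show ?thesis unfolding Inr y p Godd_E_def dunion_edge_Inr copies_edge_iff by simp
    qed
  next
    fix x y z assume "blk x = blk y" "blk y = blk z" "g x = g y" "g y = g z"
    then show "x = y \<or> y = z \<or> x = z"
      using div2_fibre_pairs[of "idx x" "idx y" "idx z"] blk_idx_inj unfolding g_def by metis
  qed
  also have "card (blk ` Godd_V d) \<le> card (Inl ` {..<d+3} \<union> Inr ` {..<d+1} :: (nat + nat) set)"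
    by (rule card_mono) (auto simp: V blk_def)
  also have "\<dots> \<le> 2*d + 4" using card_Un_le[of "Inl ` {..<d+3}" "Inr ` {..<d+1} :: (nat + nat) set"]
    by (simp add: card_image)
  finally show ?thesis using S(2) by simp
qed

lemma Godd_extremal:
  assumes "odd d"
  shows "simple_graph (Godd_V d) (Godd_E d)" and "avg_deg (Godd_V d) (Godd_E d) \<le> real d"
    and "real (alpha_k 1 (Godd_V d) (Godd_E d)) / real (card (Godd_V d)) \<le> f1_value d"
proof -
  show "simple_graph (Godd_V d) (Godd_E d)" by (rule Godd_simple_graph)
  have ne: "Godd_V d \<noteq> {}" using Godd_card[of d] by auto
  show "avg_deg (Godd_V d) (Godd_E d) \<le> real d"
    using avg_deg_le_iff[OF simple_graph_finite[OF Godd_simple_graph] ne] Godd_edges_card[OF assms]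
    by blast
  have "0 < card (Godd_V d)" by (simp add: Godd_card)
  then have pos: "0 < real (card (Godd_V d))" by simp
  have "real (alpha_k 1 (Godd_V d) (Godd_E d)) \<le> 4 * real d + 8" using Godd_alpha[of d] by simp
  then have "real (alpha_k 1 (Godd_V d) (Godd_E d)) * ((real d + 1) * (real d + 3))
      \<le> (4 * real d + 8) * ((real d + 1) * (real d + 3))" by (intro mult_right_mono) simp_all
  also have "\<dots> = 2 * (real d + 2) * real (card (Godd_V d))" by (simp add: Godd_card algebra_simps)
  finally have "real (alpha_k 1 (Godd_V d) (Godd_E d)) / real (card (Godd_V d))
      \<le> 2 * (real d + 2) / ((real d + 1) * (real d + 3))"
    by (rule divide_le_divide_cross[OF pos, rotated]) simp
  then show "real (alpha_k 1 (Godd_V d) (Godd_E d)) / real (card (Godd_V d)) \<le> f1_value d"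
    using assms by (simp add: f1_value_def)
qed


theorem mainTheorem6:
  fixes d :: nat
  shows "(even d \<longrightarrow> f_kd 1 d = 2 / (real d + 2))
       \<and> (odd d \<longrightarrow> f_kd 1 d = 2 * (real d + 2) / ((real d + 1) * (real d + 3)))
       \<and> (even d \<longrightarrow> simple_graph (J_verts (d+2)) (J_edges (d+2))
              \<and> avg_deg (J_verts (d+2)) (J_edges (d+2)) \<le> real d
              \<and> f_kd 1 d = real (alpha_k 1 (J_verts (d+2)) (J_edges (d+2))) / real (card (J_verts (d+2))))
       \<and> (odd d \<longrightarrow> simple_graph (Godd_V d) (Godd_E d)
              \<and> avg_deg (Godd_V d) (Godd_E d) \<le> real d
              \<and> f_kd 1 d = real (alpha_k 1 (Godd_V d) (Godd_E d)) / real (card (Godd_V d)))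
       \<and> f_kd 1 d \<ge> 2 / (real d + 2)
       \<and> (\<forall>(V :: 'a set) E. simple_graph V E \<and> V \<noteq> {} \<longrightarrow>
             real (alpha_k 1 V E) \<ge> 2 * real (card V) / (of_int \<lceil>avg_deg V E\<rceil> + 2))"
proof -
  have ceiling_bound: "\<forall>(V :: 'a set) E. simple_graph V E \<and> V \<noteq> {} \<longrightarrow>
      real (alpha_k 1 V E) \<ge> 2 * real (card V) / (of_int \<lceil>avg_deg V E\<rceil> + 2)"
    using alpha1_ceiling_bound by blast
  show ?thesis
  proof (cases "even d")
    case True
    note J = J_extremal[OF True]
    have "J_verts (d+2) \<noteq> {}" by (simp add: J_verts_def)
    note f = f1_attained[OF J(1) this J(2,3)]
    have "f1_value d = 2 / (real d + 2)" using True by (simp add: f1_value_def)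
    then have "f_kd 1 d = 2 / (real d + 2)"
      and "f_kd 1 d = real (alpha_k 1 (J_verts (d+2)) (J_edges (d+2))) / real (card (J_verts (d+2)))"
      and "2 / (real d + 2) \<le> f_kd 1 d"
      using f by simp_all
    then show ?thesis using True J(1,2) ceiling_bound by blast
  next
    case False
    note G = Godd_extremal[OF False]
    have "Godd_V d \<noteq> {}" using Godd_card[of d] by auto
    note f = f1_attained[OF G(1) this G(2,3)]
    have "f1_value d = 2 * (real d + 2) / ((real d + 1) * (real d + 3))"
      using False by (simp add: f1_value_def)
    then have "f_kd 1 d = 2 * (real d + 2) / ((real d + 1) * (real d + 3))"
      and "f_kd 1 d = real (alpha_k 1 (Godd_V d) (Godd_E d)) / real (card (Godd_V d))"
      and "2 / (real d + 2) \<le> f_kd 1 d"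
      using f f1_value_ge[of d] by simp_all
    then show ?thesis using False G(1,2) ceiling_bound by blast
  qed
qed

end
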